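(* Every star-like hereditary family is finitely generated; that is, if $\mathcal{F}$ is a star-like hereditary family then there is a finite set of graphs $\mathcal{H}$ with $\mathcal{F}=\operatorname{Forb}(\mathcal{H})$.
   Context: Graphs are finite and simple. A family is hereditary if closed under isomorphism and induced subgraphs. $\operatorname{Forb}(\mathcal{H})$ is the family of graphs with no induced subgraph isomorphic to a member of $\mathcal{H}$. A set $X\subseteq V(G)$ is a crown of $G$ if every $v\in V(G)$ is adjacent either to all vertices of $X\setminus\{v\}$ or to none of them; $S\subseteq V(G)$ is a core if $V(G)\setminus S$ is a crown; $G$ is an $s$-star if it has a core of size at most $s$. A hereditary family is $s$-star-like if there exists $n_0$ such that every graph in it with at least $n_0$ vertices is an $s$-star, and star-like if it is $s$-star-like for some integer $s\ge0$. *)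

theory Defs
  imports Main
begin

type_synonym graph = "nat set \<times> (nat \<times> nat) set"

definition verts :: "graph \<Rightarrow> nat set" where "verts G = fst G"
definition edges :: "graph \<Rightarrow> (nat \<times> nat) set" where "edges G = snd G"

definition is_graph :: "graph \<Rightarrow> bool" where
  "is_graph G \<longleftrightarrow> finite (verts G) \<and> edges G \<subseteq> verts G \<times> verts G
     \<and> sym (edges G) \<and> irrefl (edges G)"

definition graph_iso :: "graph \<Rightarrow> graph \<Rightarrow> bool" where
  "graph_iso G H \<longleftrightarrow> (\<exists>f. bij_betw f (verts G) (verts H) \<and>
     (\<forall>u\<in>verts G. \<forall>v\<in>verts G. (u, v) \<in> edges G \<longleftrightarrow> (f u, f v) \<in> edges H))"

definition induced :: "graph \<Rightarrow> nat set \<Rightarrow> graph" where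
  "induced G S = (S, edges G \<inter> (S \<times> S))"

definition has_induced :: "graph \<Rightarrow> graph \<Rightarrow> bool" where
  "has_induced G H \<longleftrightarrow> (\<exists>S \<subseteq> verts G. graph_iso H (induced G S))"

definition hereditary :: "graph set \<Rightarrow> bool" where
  "hereditary F \<longleftrightarrow> (\<forall>G\<in>F. is_graph G)
     \<and> (\<forall>G\<in>F. \<forall>H. is_graph H \<and> graph_iso G H \<longrightarrow> H \<in> F)
     \<and> (\<forall>G\<in>F. \<forall>S \<subseteq> verts G. induced G S \<in> F)"

definition Forb :: "graph set \<Rightarrow> graph set" where
  "Forb \<H> = {G. is_graph G \<and> \<not> (\<exists>H\<in>\<H>. has_induced G H)}"

definition crown :: "graph \<Rightarrow> nat set \<Rightarrow> bool" where
  "crown G X \<longleftrightarrow> X \<subseteq> verts G \<and> (\<forall>v\<in>verts G.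
     (\<forall>x\<in>X - {v}. (v, x) \<in> edges G) \<or> (\<forall>x\<in>X - {v}. (v, x) \<notin> edges G))"

definition core :: "graph \<Rightarrow> nat set \<Rightarrow> bool" where
  "core G S \<longleftrightarrow> S \<subseteq> verts G \<and> crown G (verts G - S)"

definition s_star :: "nat \<Rightarrow> graph \<Rightarrow> bool" where
  "s_star s G \<longleftrightarrow> (\<exists>S. core G S \<and> card S \<le> s)"

definition s_star_like :: "nat \<Rightarrow> graph set \<Rightarrow> bool" where
  "s_star_like s F \<longleftrightarrow> (\<exists>n0. \<forall>G\<in>F. card (verts G) \<ge> n0 \<longrightarrow> s_star s G)"

definition star_like :: "graph set \<Rightarrow> bool" where
  "star_like F \<longleftrightarrow> (\<exists>s. s_star_like s F)"

end

theory Submission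
  imports Defs
begin

text \<open>Call a graph minimal forbidden for \<open>F\<close> if it is not in \<open>F\<close> but all its proper induced
  subgraphs are. If such a graph is large, deleting either of two vertices leaves an \<open>s\<close>-star in
  \<open>F\<close>, and the two crowns intersect in a crown of the whole graph, so it is a \<open>(2s+2)\<close>-star.
  A graph with a crown \<open>X\<close> is determined up to isomorphism by its core, the core vertices joined
  to \<open>X\<close>, whether \<open>X\<close> is a clique, and \<open>|X|\<close>; with a core of bounded size the first three
  data range over a finite set, and for each of them minimality forces \<open>|X|\<close> to be the least
  size at which the graph leaves \<open>F\<close>. So minimal forbidden graphs have bounded size, and \<open>F\<close>
  excludes exactly the non-members on a bounded vertex set.\<close>

definition graph_iso_map :: "(nat \<Rightarrow> nat) \<Rightarrow> graph \<Rightarrow> graph \<Rightarrow> bool" where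
  "graph_iso_map f G H \<longleftrightarrow> bij_betw f (verts G) (verts H) \<and>
     (\<forall>u\<in>verts G. \<forall>v\<in>verts G. (u, v) \<in> edges G \<longleftrightarrow> (f u, f v) \<in> edges H)"

lemma graph_iso_iff_map: "graph_iso G H \<longleftrightarrow> (\<exists>f. graph_iso_map f G H)"
  by (simp add: graph_iso_def graph_iso_map_def)

lemma verts_induced [simp]: "verts (induced G S) = S"
  by (simp add: induced_def verts_def)

lemma edges_induced [simp]: "edges (induced G S) = edges G \<inter> (S \<times> S)"
  by (simp add: induced_def edges_def)

lemma induced_induced [simp]: "S' \<subseteq> S \<Longrightarrow> induced (induced G S) S' = induced G S'"
  by (auto simp: induced_def edges_def)

lemma induced_verts: "is_graph G \<Longrightarrow> induced G (verts G) = G"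
  by (cases G) (auto simp: induced_def is_graph_def edges_def verts_def)

lemma is_graph_induced: "is_graph G \<Longrightarrow> S \<subseteq> verts G \<Longrightarrow> is_graph (induced G S)"
  unfolding is_graph_def by (auto simp: sym_def irrefl_def intro: finite_subset)

lemma finite_graphs_on: "finite A \<Longrightarrow> finite {G. is_graph G \<and> verts G \<subseteq> A}"
  by (rule finite_subset[of _ "Pow A \<times> Pow (A \<times> A)"])
     (auto simp: is_graph_def verts_def edges_def)

lemma graph_iso_sym:
  assumes "graph_iso G H"
  shows "graph_iso H G"
proof -
  obtain f where f: "graph_iso_map f G H"
    using assms by (auto simp: graph_iso_iff_map)
  let ?g = "the_inv_into (verts G) f"
  have g: "bij_betw ?g (verts H) (verts G)"
    using f by (simp add: graph_iso_map_def bij_betw_the_inv_into)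
  have "(u, v) \<in> edges H \<longleftrightarrow> (?g u, ?g v) \<in> edges G" if "u \<in> verts H" "v \<in> verts H" for u v
  proof -
    have "?g u \<in> verts G" "?g v \<in> verts G" "f (?g u) = u" "f (?g v) = v"
      using f that by (auto simp: graph_iso_map_def bij_betw_def f_the_inv_into_f the_inv_into_into)
    then show ?thesis
      using f by (metis graph_iso_map_def)
  qed
  then show ?thesis
    using g by (auto simp: graph_iso_iff_map graph_iso_map_def)
qed

lemma graph_iso_map_induced:
  assumes "graph_iso_map f G H" "S \<subseteq> verts G"
  shows "graph_iso_map f (induced G S) (induced H (f ` S))"
proof -
  have "bij_betw f S (f ` S)"
    using assms bij_betw_subset[of f "verts G" "verts H" S] by (auto simp: graph_iso_map_def)
  then show ?thesis
    using assms by (auto simp: graph_iso_map_def bij_betw_def)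
qed

lemma card_verts_graph_iso: "graph_iso G H \<Longrightarrow> card (verts G) = card (verts H)"
  by (auto simp: graph_iso_iff_map graph_iso_map_def bij_betw_same_card)

lemma graph_iso_relabel:
  assumes "is_graph G"
  shows "\<exists>H. is_graph H \<and> verts H = {..<card (verts G)} \<and> graph_iso H G"
proof -
  let ?n = "card (verts G)"
  obtain g where g: "bij_betw g {..<?n} (verts G)"
    using assms ex_bij_betw_nat_finite[of "verts G"] by (auto simp: is_graph_def lessThan_atLeast0)
  define H where "H = ({..<?n}, {(i, j). i < ?n \<and> j < ?n \<and> (g i, g j) \<in> edges G})"
  have "is_graph H"
    using assms by (auto simp: H_def is_graph_def verts_def edges_def sym_def irrefl_def)
  moreover have "graph_iso_map g H G"
    using g by (auto simp: graph_iso_map_def H_def verts_def edges_def)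
  ultimately show ?thesis
    by (auto simp: graph_iso_iff_map H_def verts_def)
qed

lemma hereditary_is_graph: "hereditary F \<Longrightarrow> G \<in> F \<Longrightarrow> is_graph G"
  by (simp add: hereditary_def)

lemma hereditary_graph_iso: "hereditary F \<Longrightarrow> G \<in> F \<Longrightarrow> graph_iso G H \<Longrightarrow> is_graph H \<Longrightarrow> H \<in> F"
  unfolding hereditary_def by blast

lemma hereditary_induced: "hereditary F \<Longrightarrow> G \<in> F \<Longrightarrow> S \<subseteq> verts G \<Longrightarrow> induced G S \<in> F"
  unfolding hereditary_def by blast

definition minimal_forbidden :: "graph set \<Rightarrow> graph \<Rightarrow> bool" where
  "minimal_forbidden F M \<longleftrightarrow> is_graph M \<and> M \<notin> F \<and> (\<forall>S \<subset> verts M. induced M S \<in> F)"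

lemma ex_minimal_forbidden_induced:
  assumes "is_graph G" "G \<notin> F"
  shows "\<exists>S \<subseteq> verts G. minimal_forbidden F (induced G S)"
proof -
  let ?P = "\<lambda>S. S \<subseteq> verts G \<and> induced G S \<notin> F"
  have "?P (verts G)"
    using assms by (simp add: induced_verts)
  then obtain S where S: "?P S" and least: "\<And>S'. ?P S' \<Longrightarrow> card S \<le> card S'"
    using ex_has_least_nat[of ?P "verts G" card] by blast
  have "finite S"
    using S assms by (auto simp: is_graph_def intro: finite_subset)
  have "induced G S' \<in> F" if "S' \<subset> S" for S'
  proof (rule ccontr)
    assume "induced G S' \<notin> F"
    then have "card S \<le> card S'"
      using that S least[of S'] by auto
    then show False
      using psubset_card_mono[OF \<open>finite S\<close> that] by simp
  qed
  then have "minimal_forbidden F (induced G S)"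
    using S assms by (simp add: minimal_forbidden_def is_graph_induced)
  then show ?thesis
    using S by blast
qed

lemma minimal_forbidden_graph_iso:
  assumes F: "hereditary F" and M: "minimal_forbidden F M"
    and iso: "graph_iso M G" and G: "is_graph G"
  shows "minimal_forbidden F G"
proof -
  have "G \<notin> F"
    using M iso F graph_iso_sym hereditary_graph_iso by (metis minimal_forbidden_def)
  moreover have "induced G S \<in> F" if S: "S \<subset> verts G" for S
  proof -
    obtain f where f: "graph_iso_map f G M"
      using graph_iso_sym[OF iso] by (auto simp: graph_iso_iff_map)
    then have "f ` S \<subset> verts M"
      using S inj_on_image_eq_iff[of f "verts G" S "verts G"]
      by (auto simp: graph_iso_map_def bij_betw_def)
    then have "induced M (f ` S) \<in> F"
      using M by (simp add: minimal_forbidden_def)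
    moreover have "graph_iso (induced M (f ` S)) (induced G S)"
      using graph_iso_map_induced[OF f] S graph_iso_sym graph_iso_iff_map by blast
    ultimately show ?thesis
      using F G S by (auto intro: hereditary_graph_iso is_graph_induced)
  qed
  ultimately show ?thesis
    using G by (simp add: minimal_forbidden_def)
qed

lemma crown_Int_delete:
  assumes X: "crown (induced G (verts G - {u})) X" and Y: "crown (induced G (verts G - {v})) Y"
    and "u \<noteq> v"
  shows "crown G (X \<inter> Y)"
  unfolding crown_def
proof (intro conjI ballI)
  show "X \<inter> Y \<subseteq> verts G"
    using X by (auto simp: crown_def)
next
  fix w assume w: "w \<in> verts G"
  have X': "X \<subseteq> verts G - {u}" and Y': "Y \<subseteq> verts G - {v}"
    using X Y by (auto simp: crown_def)
  show "(\<forall>x\<in>X \<inter> Y - {w}. (w, x) \<in> edges G) \<or> (\<forall>x\<in>X \<inter> Y - {w}. (w, x) \<notin> edges G)"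
  proof (cases "w = u")
    case False
    then have "(\<forall>x\<in>X - {w}. (w, x) \<in> edges G) \<or> (\<forall>x\<in>X - {w}. (w, x) \<notin> edges G)"
      using X X' w unfolding crown_def by auto
    then show ?thesis by blast
  next
    case True
    then have "(\<forall>x\<in>Y - {w}. (w, x) \<in> edges G) \<or> (\<forall>x\<in>Y - {w}. (w, x) \<notin> edges G)"
      using Y Y' w \<open>u \<noteq> v\<close> unfolding crown_def by auto
    then show ?thesis by blast
  qed
qed

lemma minimal_forbidden_delete_s_star:
  assumes stars: "\<forall>G\<in>F. n0 \<le> card (verts G) \<longrightarrow> s_star s G"
    and M: "minimal_forbidden F M" and "n0 < card (verts M)" and v: "v \<in> verts M"
  shows "s_star s (induced M (verts M - {v}))"
proof -
  have "finite (verts M)"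
    using M by (simp add: minimal_forbidden_def is_graph_def)
  then have "n0 \<le> card (verts M - {v})"
    using assms(3) v by simp
  moreover have "induced M (verts M - {v}) \<in> F"
    using M v by (auto simp: minimal_forbidden_def)
  ultimately show ?thesis
    using stars by simp
qed

lemma minimal_forbidden_s_star:
  assumes stars: "\<forall>G\<in>F. n0 \<le> card (verts G) \<longrightarrow> s_star s G"
    and M: "minimal_forbidden F M" and big: "n0 + 2 \<le> card (verts M)"
  shows "s_star (2 * s + 2) M"
proof -
  define V where "V = verts M"
  have two: "2 \<le> card V"
    using big by (simp add: V_def)
  then obtain u where u: "u \<in> V"
    by fastforce
  have "card (V - {u}) \<noteq> 0"
    using two u by (simp add: card_Diff_singleton_if)
  then obtain v where v: "v \<in> V - {u}"
    by (metis card.empty ex_in_conv)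
  have core_delete: "\<exists>S. core (induced M (V - {w})) S \<and> card S \<le> s" if "w \<in> V" for w
    using minimal_forbidden_delete_s_star[OF stars M _ that[unfolded V_def]] big
    by (simp add: s_star_def V_def)
  obtain S where S: "core (induced M (V - {u})) S" "card S \<le> s"
    using core_delete u by blast
  obtain S' where S': "core (induced M (V - {v})) S'" "card S' \<le> s"
    using core_delete v by blast
  have "crown M ((V - {u} - S) \<inter> (V - {v} - S'))"
    using crown_Int_delete[of M u _ v] S(1) S'(1) v by (simp add: core_def V_def)
  moreover have "(V - {u} - S) \<inter> (V - {v} - S') = V - ({u, v} \<union> S \<union> S')"
    by auto
  moreover have "{u, v} \<union> S \<union> S' \<subseteq> V"
    using u v S(1) S'(1) by (auto simp: core_def)
  ultimately have "core M ({u, v} \<union> S \<union> S')"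
    by (simp add: core_def V_def)
  moreover have "card ({u, v} \<union> S \<union> S') \<le> 2 * s + 2"
  proof -
    have "card {u, v} = 2"
      using v by simp
    then show ?thesis
      using S(2) S'(2) card_Un_le[of "{u, v} \<union> S" S'] card_Un_le[of "{u, v}" S] by linarith
  qed
  ultimately show ?thesis
    unfolding s_star_def by blast
qed

definition crown_extension :: "graph \<Rightarrow> nat set \<Rightarrow> bool \<Rightarrow> nat set \<Rightarrow> graph" where
  "crown_extension C P b T =
     (verts C \<union> T, edges C \<union> P \<times> T \<union> T \<times> P \<union> {(x, y). b \<and> x \<in> T \<and> y \<in> T \<and> x \<noteq> y})"

lemma verts_crown_extension [simp]: "verts (crown_extension C P b T) = verts C \<union> T"
  by (simp add: crown_extension_def verts_def)

lemma edges_crown_extension [simp]: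
  "edges (crown_extension C P b T) =
     edges C \<union> P \<times> T \<union> T \<times> P \<union> {(x, y). b \<and> x \<in> T \<and> y \<in> T \<and> x \<noteq> y}"
  by (simp add: crown_extension_def edges_def)

lemma is_graph_crown_extension:
  assumes "is_graph C" "P \<subseteq> verts C" "finite T" "verts C \<inter> T = {}"
  shows "is_graph (crown_extension C P b T)"
  using assms unfolding is_graph_def sym_def irrefl_def by auto

lemma induced_crown_extension:
  assumes "is_graph C" "P \<subseteq> verts C" "verts C \<inter> T = {}" "T' \<subseteq> T"
  shows "induced (crown_extension C P b T) (verts C \<union> T') = crown_extension C P b T'"
  using assms unfolding is_graph_def by (auto simp: induced_def crown_extension_def edges_def)

lemma card_verts_crown_extension_le:
  "verts C \<subseteq> {..<B} \<Longrightarrow> card (verts (crown_extension C P b {B..<B + k})) \<le> B + k"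
  using card_mono[of "{..<B}" "verts C"] card_Un_le[of "verts C" "{B..<B + k}"] by simp

lemma crown_clique_or_independent:
  assumes G: "is_graph G" and X: "crown G X"
  shows "(\<forall>x\<in>X. \<forall>y\<in>X. x \<noteq> y \<longrightarrow> (x, y) \<in> edges G) \<or> (\<forall>x\<in>X. \<forall>y\<in>X. (x, y) \<notin> edges G)"
proof (rule disjCI)
  assume "\<not> (\<forall>x\<in>X. \<forall>y\<in>X. (x, y) \<notin> edges G)"
  then obtain x y where xy: "x \<in> X" "y \<in> X" "(x, y) \<in> edges G"
    by blast
  have sym: "(a, a') \<in> edges G \<Longrightarrow> (a', a) \<in> edges G" for a a'
    using G by (auto simp: is_graph_def sym_def)
  have x_not_y: "x \<noteq> y"
    using G xy by (auto simp: is_graph_def irrefl_def)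
  have full: "\<forall>z\<in>X - {a}. (a, z) \<in> edges G" if "a \<in> X" "z \<in> X - {a}" "(a, z) \<in> edges G" for a z
    using X that unfolding crown_def by blast
  have x_full: "\<forall>z\<in>X - {x}. (x, z) \<in> edges G"
    using full xy x_not_y by blast
  show "\<forall>a\<in>X. \<forall>a'\<in>X. a \<noteq> a' \<longrightarrow> (a, a') \<in> edges G"
  proof (intro ballI impI)
    fix a a' assume a: "a \<in> X" "a' \<in> X" "a \<noteq> a'"
    show "(a, a') \<in> edges G"
    proof (cases "a = x")
      case False
      then have "(a, x) \<in> edges G"
        using x_full a sym by blast
      then show ?thesis
        using full[of a x] a xy False by blast
    qed (use x_full a in blast)
  qed
qed

lemma crown_extension_of_crown:
  assumes G: "is_graph G" and X: "crown G X"
  shows "G = crown_extension (induced G (verts G - X)) {v \<in> verts G - X. \<forall>x\<in>X. (v, x) \<in> edges G}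
               (\<forall>x\<in>X. \<forall>y\<in>X. x \<noteq> y \<longrightarrow> (x, y) \<in> edges G) X"
    (is "G = crown_extension ?C ?P ?b X")
proof -
  have XV: "X \<subseteq> verts G"
    using X by (simp add: crown_def)
  have EV: "edges G \<subseteq> verts G \<times> verts G" and sym: "sym (edges G)" and irr: "irrefl (edges G)"
    using G by (auto simp: is_graph_def)
  have outside: "(v, x) \<in> edges G \<longleftrightarrow> v \<in> ?P" if "v \<in> verts G - X" "x \<in> X" for v x
  proof -
    have "X - {v} = X"
      using that by blast
    then show ?thesis
      using X that unfolding crown_def by auto
  qed
  have inside: "(x, y) \<in> edges G \<longleftrightarrow> ?b \<and> x \<noteq> y" if "x \<in> X" "y \<in> X" for x y
    using crown_clique_or_independent[OF G X] irr that unfolding irrefl_def by blast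
  have "(v, w) \<in> edges G \<longleftrightarrow> (v, w) \<in> edges (crown_extension ?C ?P ?b X)" for v w
  proof (cases "v \<in> verts G \<and> w \<in> verts G")
    case False
    then show ?thesis
      using EV XV by auto
  next
    case True
    have "(v, w) \<in> edges G \<longleftrightarrow> (w, v) \<in> edges G"
      using sym unfolding sym_def by blast
    then show ?thesis
      using True outside[of v w] outside[of w v] inside[of v w] by auto
  qed
  then have "edges G = edges (crown_extension ?C ?P ?b X)"
    by (simp add: set_eq_iff split_paired_All)
  moreover have "verts G = verts (crown_extension ?C ?P ?b X)"
    using XV by auto
  ultimately show ?thesis
    by (simp add: prod_eq_iff flip: verts_def edges_def)
qed

lemma graph_iso_crown_extension:
  assumes C: "is_graph C" and C': "is_graph C'" and g: "graph_iso_map g C C'" and h: "bij_betw h T T'"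
    and disj: "verts C \<inter> T = {}" "verts C' \<inter> T' = {}" and P: "P \<subseteq> verts C"
  shows "graph_iso (crown_extension C P b T) (crown_extension C' (g ` P) b T')"
proof -
  define f where "f x = (if x \<in> verts C then g x else h x)" for x
  have g_bij: "bij_betw g (verts C) (verts C')"
    using g by (simp add: graph_iso_map_def)
  have "bij_betw f (verts C) (verts C') \<longleftrightarrow> bij_betw g (verts C) (verts C')"
    by (intro bij_betw_cong) (simp add: f_def)
  moreover have "bij_betw f T T' \<longleftrightarrow> bij_betw h T T'"
    using disj(1) by (intro bij_betw_cong) (auto simp: f_def)
  ultimately have "bij_betw f (verts C) (verts C')" "bij_betw f T T'"
    using g_bij h by simp_all
  then have "bij_betw f (verts C \<union> T) (verts C' \<union> T')"
    using disj(2) by (intro bij_betw_combine)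
  moreover have "(u, v) \<in> edges (crown_extension C P b T) \<longleftrightarrow>
      (f u, f v) \<in> edges (crown_extension C' (g ` P) b T')"
    if uv: "u \<in> verts C \<union> T" "v \<in> verts C \<union> T" for u v
  proof -
    have EC: "edges C \<subseteq> verts C \<times> verts C" "edges C' \<subseteq> verts C' \<times> verts C'"
      using C C' by (simp_all add: is_graph_def)
    have fC: "x \<in> verts C \<Longrightarrow> f x = g x \<and> g x \<in> verts C'" for x
      using g_bij by (auto simp: f_def bij_betw_def)
    have fT: "x \<in> T \<Longrightarrow> f x = h x \<and> h x \<in> T' \<and> h x \<notin> verts C'" for x
      using h disj by (auto simp: f_def bij_betw_def)
    have gP: "x \<in> verts C \<Longrightarrow> g x \<in> g ` P \<longleftrightarrow> x \<in> P" for x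
      using g_bij P inj_on_image_mem_iff[of g "verts C" x P] by (simp add: bij_betw_def)
    have h_inj: "x \<in> T \<Longrightarrow> y \<in> T \<Longrightarrow> h x = h y \<longleftrightarrow> x = y" for x y
      using h by (auto simp: bij_betw_def inj_on_eq_iff)
    have g_edges: "x \<in> verts C \<Longrightarrow> y \<in> verts C \<Longrightarrow> (x, y) \<in> edges C \<longleftrightarrow> (g x, g y) \<in> edges C'" for x y
      using g by (simp add: graph_iso_map_def)
    have "g ` P \<subseteq> verts C'"
      using P g_bij by (auto simp: bij_betw_def)
    then have PT: "P \<inter> T = {}" "g ` P \<inter> T' = {}"
      using P disj by blast+
    consider "u \<in> verts C" "v \<in> verts C" | "u \<in> verts C" "v \<in> T"
      | "u \<in> T" "v \<in> verts C" | "u \<in> T" "v \<in> T"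
      using uv by blast
    then show ?thesis
    proof cases
      case 1
      then show ?thesis
        using disj fC[of u] fC[of v] g_edges[of u v] by auto
    next
      case 2
      then show ?thesis
        using disj EC fC[of u] fT[of v] gP[of u] by auto
    next
      case 3
      then show ?thesis
        using disj EC fT[of u] fC[of v] gP[of v] by auto
    next
      case 4
      then show ?thesis
        using disj EC PT fT[of u] fT[of v] h_inj[of u v] by auto
    qed
  qed
  ultimately show ?thesis
    by (auto simp: graph_iso_iff_map graph_iso_map_def)
qed

lemma s_star_crown_extension_form:
  assumes M: "is_graph M" and star: "s_star B M"
  obtains C P b k where "is_graph C" "verts C \<subseteq> {..<B}" "P \<subseteq> verts C"
    "graph_iso (crown_extension C P b {B..<B + k}) M"
proof -
  obtain S where S: "core M S" "card S \<le> B"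
    using star by (auto simp: s_star_def)
  define X where "X = verts M - S"
  have X: "crown M X" and S_eq: "verts M - X = S"
    using S(1) by (auto simp: core_def X_def)
  define C where "C = induced M S"
  define P where "P = {v \<in> verts M - X. \<forall>x\<in>X. (v, x) \<in> edges M}"
  define b where "b = (\<forall>x\<in>X. \<forall>y\<in>X. x \<noteq> y \<longrightarrow> (x, y) \<in> edges M)"
  have M_eq: "M = crown_extension C P b X"
    unfolding C_def P_def b_def S_eq[symmetric] by (rule crown_extension_of_crown[OF M X])
  have PC: "P \<subseteq> verts C"
    by (auto simp: P_def C_def S_eq[symmetric])
  have C: "is_graph C"
    using M S(1) by (simp add: C_def core_def is_graph_induced)
  obtain C' where C': "is_graph C'" "verts C' = {..<card S}" "graph_iso C' C"
    using graph_iso_relabel[OF C] by (auto simp: C_def)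
  obtain g where g: "graph_iso_map g C C'"
    using graph_iso_sym[OF C'(3)] by (auto simp: graph_iso_iff_map)
  have "finite X"
    using M by (simp add: X_def is_graph_def)
  then obtain h where h: "bij_betw h X {B..<B + card X}"
    using finite_same_card_bij[of X "{B..<B + card X}"] by auto
  have "graph_iso M (crown_extension C' (g ` P) b {B..<B + card X})"
    unfolding M_eq
  proof (rule graph_iso_crown_extension[OF C C'(1) g h])
    show "verts C \<inter> X = {}" "verts C' \<inter> {B..<B + card X} = {}" "P \<subseteq> verts C"
      using C'(2) S(2) PC by (auto simp: C_def S_eq[symmetric])
  qed
  moreover have "g ` P \<subseteq> verts C'"
    using g PC by (auto simp: graph_iso_map_def bij_betw_def)
  moreover have "verts C' \<subseteq> {..<B}"
    using C'(2) S(2) by auto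
  ultimately show ?thesis
    using that[of C' "g ` P" b "card X"] C'(1) graph_iso_sym by blast
qed

lemma minimal_forbidden_crown_extension_Least:
  assumes M: "minimal_forbidden F (crown_extension C P b {B..<B + k})"
    and C: "is_graph C" "verts C \<subseteq> {..<B}" "P \<subseteq> verts C"
  shows "k = (LEAST j. crown_extension C P b {B..<B + j} \<notin> F)"
proof (rule Least_equality[symmetric])
  show "crown_extension C P b {B..<B + k} \<notin> F"
    using M by (simp add: minimal_forbidden_def)
next
  fix j assume j: "crown_extension C P b {B..<B + j} \<notin> F"
  show "k \<le> j"
  proof (rule ccontr)
    assume "\<not> k \<le> j"
    then have "verts C \<union> {B..<B + j} \<subset> verts (crown_extension C P b {B..<B + k})"
      using C(2) by auto
    then have "induced (crown_extension C P b {B..<B + k}) (verts C \<union> {B..<B + j}) \<in> F"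
      using M by (simp add: minimal_forbidden_def)
    moreover have "verts C \<inter> {B..<B + k} = {}"
      using C(2) by auto
    ultimately show False
      using j C \<open>\<not> k \<le> j\<close> by (simp add: induced_crown_extension)
  qed
qed

lemma star_like_minimal_forbidden_bounded:
  assumes F: "hereditary F" and "star_like F"
  shows "\<exists>N. \<forall>M. minimal_forbidden F M \<longrightarrow> card (verts M) \<le> N"
proof -
  obtain s n0 where stars: "\<forall>G\<in>F. n0 \<le> card (verts G) \<longrightarrow> s_star s G"
    using assms(2) by (auto simp: star_like_def s_star_like_def)
  define B where "B = 2 * s + 2"
  define Sig where "Sig = {(C, P, b :: bool). is_graph C \<and> verts C \<subseteq> {..<B} \<and> P \<subseteq> verts C}"
  define thr where "thr = (\<lambda>(C, P, b). LEAST j. crown_extension C P b {B..<B + j} \<notin> F)"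
  have "Sig \<subseteq> {C. is_graph C \<and> verts C \<subseteq> {..<B}} \<times> Pow {..<B} \<times> UNIV"
    by (auto simp: Sig_def)
  then have Sig_finite: "finite Sig"
    by (rule finite_subset) (simp add: finite_graphs_on)
  have "card (verts M) \<le> n0 + 2 + B + sum thr Sig" if M: "minimal_forbidden F M" for M
  proof (cases "card (verts M) < n0 + 2")
    case False
    have M_graph: "is_graph M"
      using M by (simp add: minimal_forbidden_def)
    have "s_star B M"
      using minimal_forbidden_s_star[OF stars M] False by (simp add: B_def)
    then obtain C P b k where C: "is_graph C" "verts C \<subseteq> {..<B}" "P \<subseteq> verts C"
      and iso: "graph_iso (crown_extension C P b {B..<B + k}) M"
      by (rule s_star_crown_extension_form[OF M_graph])
    have "is_graph (crown_extension C P b {B..<B + k})"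
      using C by (intro is_graph_crown_extension) auto
    then have "minimal_forbidden F (crown_extension C P b {B..<B + k})"
      using minimal_forbidden_graph_iso[OF F M graph_iso_sym[OF iso]] by simp
    then have "k = thr (C, P, b)"
      using minimal_forbidden_crown_extension_Least C by (simp add: thr_def)
    also have "\<dots> \<le> sum thr Sig"
      using C Sig_finite by (intro member_le_sum) (auto simp: Sig_def)
    finally have "k \<le> sum thr Sig" .
    moreover have "card (verts M) \<le> B + k"
      using card_verts_graph_iso[OF iso] card_verts_crown_extension_le[OF C(2), of P b k] by simp
    ultimately show ?thesis
      by linarith
  qed simp
  then show ?thesis
    by blast
qed

lemma hereditary_eq_Forb_small_nonmembers:
  assumes F: "hereditary F" and N: "\<forall>M. minimal_forbidden F M \<longrightarrow> card (verts M) \<le> N"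
  defines "\<H> \<equiv> {H. is_graph H \<and> verts H \<subseteq> {..<N} \<and> H \<notin> F}"
  shows "F = Forb \<H>"
proof (intro equalityI subsetI)
  fix G assume G: "G \<in> F"
  have "\<not> has_induced G H" if H: "H \<in> \<H>" for H
  proof
    assume "has_induced G H"
    then obtain S where S: "S \<subseteq> verts G" "graph_iso H (induced G S)"
      by (auto simp: has_induced_def)
    have "induced G S \<in> F"
      using F G S(1) by (rule hereditary_induced)
    then have "H \<in> F"
      using hereditary_graph_iso[OF F _ graph_iso_sym[OF S(2)]] H by (simp add: \<H>_def)
    then show False
      using H by (simp add: \<H>_def)
  qed
  then show "G \<in> Forb \<H>"
    using hereditary_is_graph[OF F G] by (simp add: Forb_def)
next
  fix G assume G: "G \<in> Forb \<H>"
  then have G_graph: "is_graph G"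
    by (simp add: Forb_def)
  show "G \<in> F"
  proof (rule ccontr)
    assume "G \<notin> F"
    then obtain S where S: "S \<subseteq> verts G" "minimal_forbidden F (induced G S)"
      using ex_minimal_forbidden_induced[OF G_graph] by blast
    have M_graph: "is_graph (induced G S)"
      using S(2) by (simp add: minimal_forbidden_def)
    obtain H where H: "is_graph H" "verts H = {..<card S}" "graph_iso H (induced G S)"
      using graph_iso_relabel[OF M_graph] by auto
    have "card S \<le> N"
      using spec[OF N, of "induced G S"] S(2) by simp
    moreover have "H \<notin> F"
    proof
      assume "H \<in> F"
      then have "induced G S \<in> F"
        using hereditary_graph_iso[OF F _ H(3) M_graph] by simp
      then show False
        using S(2) by (simp add: minimal_forbidden_def)
    qed
    ultimately have "H \<in> \<H>"
      using H(1,2) by (auto simp: \<H>_def)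
    moreover have "has_induced G H"
      using S(1) H(3) by (auto simp: has_induced_def)
    ultimately show False
      using G by (auto simp: Forb_def)
  qed
qed

theorem corollary4p2:
  assumes "hereditary F" and "star_like F"
  shows "\<exists>\<H>. finite \<H> \<and> (\<forall>H\<in>\<H>. is_graph H) \<and> F = Forb \<H>"
proof -
  obtain N where N: "\<forall>M. minimal_forbidden F M \<longrightarrow> card (verts M) \<le> N"
    using star_like_minimal_forbidden_bounded[OF assms] by blast
  let ?\<H> = "{H. is_graph H \<and> verts H \<subseteq> {..<N} \<and> H \<notin> F}"
  have "finite ?\<H>"
    by (rule finite_subset[OF _ finite_graphs_on[of "{..<N}"]]) auto
  moreover have "F = Forb ?\<H>"
    using hereditary_eq_Forb_small_nonmembers[OF assms(1) N] .
  ultimately show ?thesis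
    by blast
qed

end
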